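(* Let $\lambda_0,\lambda_1>0$, let $\boldsymbol\alpha_0^\star$ and $\boldsymbol\alpha_1^\star$ be the optimal solutions of $\max_{\boldsymbol\alpha\ge\mathbf0}D_{\lambda_0}(\boldsymbol\alpha)$ and $\max_{\boldsymbol\alpha\ge\mathbf0}D_{\lambda_1}(\boldsymbol\alpha)$, respectively, and let $\boldsymbol\alpha_0\in\mathbb R^{2nK}$ and $\epsilon\ge0$ satisfy $\|\boldsymbol\alpha_0-\boldsymbol\alpha_0^\star\|_2\le\epsilon$. Then $$\Big\|\boldsymbol\alpha_1^\star-\frac{\lambda_0+\lambda_1}{2\lambda_0}\boldsymbol\alpha_0\Big\|_2\le\Big\|\frac{\lambda_0-\lambda_1}{2\lambda_0}\boldsymbol\alpha_0\Big\|_2+\Big(\frac{\lambda_0+\lambda_1}{2\lambda_0}+\frac{|\lambda_0-\lambda_1|}{2\lambda_0}\Big)\epsilon.$$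
   Context: Let $n,K,p\ge1$ be integers, $[n]=\{1,\dots,n\}$. For each $i\in[n]$ let $\mathbf x_i\in\mathbb R^p$ have nonnegative entries and let $\mathcal D_i,\mathcal S_i\subseteq[n]$ be sets of size $K$. Put $\mathbf c_{ij}=(\mathbf x_i-\mathbf x_j)\circ(\mathbf x_i-\mathbf x_j)$ (entrywise product). Vectors in $\mathbb R^{2nK}$ are indexed by the pairs $(i,l)$, $l\in\mathcal D_i$ ("different-class pairs") and $(i,j)$, $j\in\mathcal S_i$ ("same-class pairs"). $\mathbf C\in\mathbb R^{p\times2nK}$ has column $\mathbf c_{il}$ for each different-class pair and $-\mathbf c_{ij}$ for each same-class pair. Fix $L\ge U\ge0$, $\eta>0$; let $\mathbf t\in\mathbb R^{2nK}$ have entry $L$ at different-class pairs and $-U$ at same-class pairs; $[z]_+=\max\{z,0\}$ entrywise; $\mathbf1$ the all-ones vector. For $\lambda>0$ and $\boldsymbol\alpha\in\mathbb R^{2nK}_{\ge0}$ define $$D_\lambda(\boldsymbol\alpha)=-\frac14\|\boldsymbol\alpha\|_2^2+\mathbf t^\top\boldsymbol\alpha-\frac{\lambda\eta}{2}\|\mathbf m_\lambda(\boldsymbol\alpha)\|_2^2,\qquad\mathbf m_\lambda(\boldsymbol\alpha)=\frac1{\lambda\eta}[\mathbf C\boldsymbol\alpha-\lambda\mathbf1]_+,$$ the dual of the primal problem $\min_{\mathbf m\ge\mathbf0}\sum_i\big[\sum_{l\in\mathcal D_i}([L-\mathbf m^\top\mathbf c_{il}]_+)^2+\sum_{j\in\mathcal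 S_i}([-U+\mathbf m^\top\mathbf c_{ij}]_+)^2\big]+\lambda(\mathbf m^\top\mathbf1+\frac\eta2\|\mathbf m\|_2^2)$. *)

theory Defs
  imports Complex_Main
begin

text \<open>Index set of the 2nK pairs: (i,l,True) for different-class pairs l in D_i,
 (i,j,False) for same-class pairs j in S_i, i in [n]. Feature coordinates are 0..<p.\<close>

definition pairs :: "nat \<Rightarrow> (nat \<Rightarrow> nat set) \<Rightarrow> (nat \<Rightarrow> nat set) \<Rightarrow> (nat \<times> nat \<times> bool) set" where
  "pairs n Ds Ss = {(i, j, True) | i j. i \<in> {1..n} \<and> j \<in> Ds i}
                 \<union> {(i, j, False) | i j. i \<in> {1..n} \<and> j \<in> Ss i}"

definition cvec :: "(nat \<Rightarrow> nat \<Rightarrow> real) \<Rightarrow> nat \<Rightarrow> nat \<Rightarrow> nat \<Rightarrow> real" where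
  "cvec x i j k = (x i k - x j k) * (x i k - x j k)"

definition Ccol :: "(nat \<Rightarrow> nat \<Rightarrow> real) \<Rightarrow> nat \<times> nat \<times> bool \<Rightarrow> nat \<Rightarrow> real" where
  "Ccol x q k = (case q of (i, j, b) \<Rightarrow> if b then cvec x i j k else - cvec x i j k)"

definition Cmul :: "(nat \<times> nat \<times> bool) set \<Rightarrow> (nat \<Rightarrow> nat \<Rightarrow> real) \<Rightarrow> (nat \<times> nat \<times> bool \<Rightarrow> real) \<Rightarrow> nat \<Rightarrow> real" where
  "Cmul P x \<alpha> k = (\<Sum>q\<in>P. Ccol x q k * \<alpha> q)"

definition tvec :: "real \<Rightarrow> real \<Rightarrow> nat \<times> nat \<times> bool \<Rightarrow> real" where
  "tvec L U q = (case q of (i, j, b) \<Rightarrow> if b then L else - U)"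

definition mvec :: "(nat \<times> nat \<times> bool) set \<Rightarrow> (nat \<Rightarrow> nat \<Rightarrow> real) \<Rightarrow> real \<Rightarrow> real
    \<Rightarrow> (nat \<times> nat \<times> bool \<Rightarrow> real) \<Rightarrow> nat \<Rightarrow> real" where
  "mvec P x eta lam \<alpha> k = (1 / (lam * eta)) * max (Cmul P x \<alpha> k - lam) 0"

definition Dual :: "(nat \<times> nat \<times> bool) set \<Rightarrow> nat \<Rightarrow> (nat \<Rightarrow> nat \<Rightarrow> real) \<Rightarrow> real \<Rightarrow> real \<Rightarrow> real
    \<Rightarrow> real \<Rightarrow> (nat \<times> nat \<times> bool \<Rightarrow> real) \<Rightarrow> real" where
  "Dual P p x L U eta lam \<alpha> =
     - (1/4) * (\<Sum>q\<in>P. (\<alpha> q)\<^sup>2) + (\<Sum>q\<in>P. tvec L U q * \<alpha> q)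
     - (lam * eta / 2) * (\<Sum>k<p. (mvec P x eta lam \<alpha> k)\<^sup>2)"

definition vnorm :: "(nat \<times> nat \<times> bool) set \<Rightarrow> (nat \<times> nat \<times> bool \<Rightarrow> real) \<Rightarrow> real" where
  "vnorm P v = sqrt (\<Sum>q\<in>P. (v q)\<^sup>2)"

definition dual_opt :: "(nat \<times> nat \<times> bool) set \<Rightarrow> nat \<Rightarrow> (nat \<Rightarrow> nat \<Rightarrow> real) \<Rightarrow> real \<Rightarrow> real \<Rightarrow> real
    \<Rightarrow> real \<Rightarrow> (nat \<times> nat \<times> bool \<Rightarrow> real) \<Rightarrow> bool" where
  "dual_opt P p x L U eta lam \<alpha> \<longleftrightarrow> (\<forall>q\<in>P. \<alpha> q \<ge> 0) \<and>
     (\<forall>\<beta>. (\<forall>q\<in>P. \<beta> q \<ge> 0) \<longrightarrow> Dual P p x L U eta lam \<beta> \<le> Dual P p x L U eta lam \<alpha>)"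

end

theory Submission
  imports Defs "HOL-Analysis.L2_Norm"
begin

text \<open>Writing \<open>\<alpha> = \<lambda> \<theta>\<close>, the dual objective becomes
  \<open>D\<^sub>\<lambda>(\<lambda> \<theta>) = \<lambda> F(\<theta>) - \<lambda>\<^sup>2 \<parallel>\<theta>\<parallel>\<^sup>2 / 4\<close> with \<open>F\<close> independent of \<open>\<lambda>\<close>.
  Since \<open>D\<^sub>\<lambda>\<close> is strongly concave with modulus \<open>1/2\<close>, its maximiser \<open>\<alpha>\<^sup>\<star>\<close> satisfies
  \<open>D\<^sub>\<lambda>(\<alpha>\<^sup>\<star>) - D\<^sub>\<lambda>(\<beta>) \<ge> \<parallel>\<beta> - \<alpha>\<^sup>\<star>\<parallel>\<^sup>2 / 4\<close> for every feasible \<open>\<beta>\<close>.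
  Comparing \<open>\<alpha>\<^sub>0\<^sup>\<star>\<close> with the rescaled \<open>\<lambda>\<^sub>0/\<lambda>\<^sub>1 \<alpha>\<^sub>1\<^sup>\<star>\<close> and vice versa and adding the two
  inequalities cancels \<open>F\<close> and leaves
  \<open>\<langle>\<alpha>\<^sub>0\<^sup>\<star> - \<alpha>\<^sub>1\<^sup>\<star>, \<alpha>\<^sub>0\<^sup>\<star>/\<lambda>\<^sub>0 - \<alpha>\<^sub>1\<^sup>\<star>/\<lambda>\<^sub>1\<rangle> \<le> 0\<close>, which says exactly that \<open>\<alpha>\<^sub>1\<^sup>\<star>\<close> lies in the
  ball with centre \<open>(\<lambda>\<^sub>0+\<lambda>\<^sub>1)/(2\<lambda>\<^sub>0) \<alpha>\<^sub>0\<^sup>\<star>\<close> and radius \<open>|\<lambda>\<^sub>0-\<lambda>\<^sub>1|/(2\<lambda>\<^sub>0) \<parallel>\<alpha>\<^sub>0\<^sup>\<star>\<parallel>\<close>.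
  The triangle inequality then replaces \<open>\<alpha>\<^sub>0\<^sup>\<star>\<close> by its approximation \<open>\<alpha>\<^sub>0\<close>.\<close>

lemma vnorm_eq_L2_set: "vnorm P v = L2_set v P"
  unfolding vnorm_def L2_set_def by simp

lemma le_if_one_minus_mult_le:
  fixes c g :: real
  assumes "\<And>t. 0 < t \<Longrightarrow> t \<le> 1 \<Longrightarrow> (1 - t) * c \<le> g"
  shows "c \<le> g"
proof (rule tendsto_upperbound)
  show "((\<lambda>t. (1 - t) * c) \<longlongrightarrow> c) (at_right 0)"
    by (auto intro!: tendsto_eq_intros)
  show "\<forall>\<^sub>F t in at_right 0. (1 - t) * c \<le> g"
    unfolding eventually_at_right_field using assms by (intro exI[of _ 1]) auto
qed simp

lemma Cmul_convex_comb:
  "Cmul P x (\<lambda>q. (1 - t) * a q + t * b q) k = (1 - t) * Cmul P x a k + t * Cmul P x b k"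
proof -
  have "Ccol x q k * ((1 - t) * a q + t * b q) = (1 - t) * (Ccol x q k * a q) + t * (Ccol x q k * b q)"
    for q
    by (simp add: algebra_simps)
  then show ?thesis
    unfolding Cmul_def by (simp add: sum.distrib sum_distrib_left)
qed

lemma Cmul_scale: "Cmul P x (\<lambda>q. c * a q) k = c * Cmul P x a k"
  unfolding Cmul_def by (simp add: algebra_simps sum_distrib_left)

lemma power2_convex_comb:
  fixes A B t :: real
  shows "((1 - t) * A + t * B)\<^sup>2 = (1 - t) * A\<^sup>2 + t * B\<^sup>2 - t * (1 - t) * (A - B)\<^sup>2"
  by (simp add: power2_eq_square algebra_simps)

lemma mvec_power2_convex:
  assumes "0 \<le> t" "t \<le> 1" "eta > 0" "lam > 0"
  shows "(mvec P x eta lam (\<lambda>q. (1 - t) * a q + t * b q) k)\<^sup>2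
    \<le> (1 - t) * (mvec P x eta lam a k)\<^sup>2 + t * (mvec P x eta lam b k)\<^sup>2"
proof -
  let ?m = "\<lambda>\<alpha>. mvec P x eta lam \<alpha> k"
  have "max ((1 - t) * A + t * B - lam) 0 \<le> (1 - t) * max (A - lam) 0 + t * max (B - lam) 0"
    for A B :: real
  proof -
    have "(1 - t) * (A - lam) \<le> (1 - t) * max (A - lam) 0" "t * (B - lam) \<le> t * max (B - lam) 0"
      using assms by (auto intro: mult_left_mono)
    moreover have "0 \<le> (1 - t) * max (A - lam) 0 + t * max (B - lam) 0"
      using assms by simp
    moreover have "(1 - t) * A + t * B - lam = (1 - t) * (A - lam) + t * (B - lam)"
      by (simp add: algebra_simps)
    ultimately show ?thesis by linarith
  qed
  then have "?m (\<lambda>q. (1 - t) * a q + t * b q) \<le> (1 - t) * ?m a + t * ?m b"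
    using assms unfolding mvec_def Cmul_convex_comb
    by (simp add: divide_right_mono add_divide_distrib[symmetric] times_divide_eq_right)
  moreover have "0 \<le> ?m (\<lambda>q. (1 - t) * a q + t * b q)"
    using assms unfolding mvec_def by simp
  ultimately have "(?m (\<lambda>q. (1 - t) * a q + t * b q))\<^sup>2 \<le> ((1 - t) * ?m a + t * ?m b)\<^sup>2"
    by (intro power_mono)
  also have "\<dots> \<le> (1 - t) * (?m a)\<^sup>2 + t * (?m b)\<^sup>2"
    unfolding power2_convex_comb using assms by simp
  finally show ?thesis .
qed

lemma Dual_strongly_concave:
  assumes "0 \<le> t" "t \<le> 1" "eta > 0" "lam > 0"
  shows "(1 - t) * Dual P p x L U eta lam a + t * Dual P p x L U eta lam b
       + t * (1 - t) / 4 * (\<Sum>q\<in>P. (a q - b q)\<^sup>2)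
    \<le> Dual P p x L U eta lam (\<lambda>q. (1 - t) * a q + t * b q)"
proof -
  define z where "z = (\<lambda>q. (1 - t) * a q + t * b q)"
  define Q :: "(nat \<times> nat \<times> bool \<Rightarrow> real) \<Rightarrow> real" where "Q = (\<lambda>\<alpha>. \<Sum>q\<in>P. (\<alpha> q)\<^sup>2)"
  define T :: "(nat \<times> nat \<times> bool \<Rightarrow> real) \<Rightarrow> real" where "T = (\<lambda>\<alpha>. \<Sum>q\<in>P. tvec L U q * \<alpha> q)"
  define S where "S = (\<lambda>\<alpha>. \<Sum>k<p. (mvec P x eta lam \<alpha> k)\<^sup>2)"
  have D: "Dual P p x L U eta lam \<alpha> = - (1/4) * Q \<alpha> + T \<alpha> - lam * eta / 2 * S \<alpha>" for \<alpha>
    unfolding Dual_def Q_def T_def S_def ..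
  have Qz: "Q z = (1 - t) * Q a + t * Q b - t * (1 - t) * (\<Sum>q\<in>P. (a q - b q)\<^sup>2)"
    unfolding Q_def z_def power2_convex_comb by (simp add: sum.distrib sum_subtractf sum_distrib_left)
  moreover have "tvec L U q * z q = (1 - t) * (tvec L U q * a q) + t * (tvec L U q * b q)" for q
    unfolding z_def by (simp add: algebra_simps)
  then have Tz: "T z = (1 - t) * T a + t * T b"
    unfolding T_def by (simp add: sum.distrib sum_distrib_left)
  have "(1 - t) * Dual P p x L U eta lam a + t * Dual P p x L U eta lam b
       + t * (1 - t) / 4 * (\<Sum>q\<in>P. (a q - b q)\<^sup>2)
      = - (1/4) * Q z + T z - lam * eta / 2 * ((1 - t) * S a + t * S b)"
    unfolding D Qz Tz by (simp add: field_simps)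
  moreover have "S z \<le> (\<Sum>k<p. (1 - t) * (mvec P x eta lam a k)\<^sup>2 + t * (mvec P x eta lam b k)\<^sup>2)"
    unfolding S_def z_def by (rule sum_mono) (rule mvec_power2_convex[OF assms])
  then have "lam * eta / 2 * S z \<le> lam * eta / 2 * ((1 - t) * S a + t * S b)"
    unfolding S_def using assms by (simp add: sum.distrib sum_distrib_left[symmetric])
  ultimately show ?thesis
    unfolding D z_def[symmetric] by linarith
qed

lemma dual_opt_nonneg: "dual_opt P p x L U eta lam a \<Longrightarrow> q \<in> P \<Longrightarrow> a q \<ge> 0"
  unfolding dual_opt_def by blast

lemma dual_opt_le:
  "dual_opt P p x L U eta lam a \<Longrightarrow> \<forall>q\<in>P. b q \<ge> 0
    \<Longrightarrow> Dual P p x L U eta lam b \<le> Dual P p x L U eta lam a"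
  unfolding dual_opt_def by blast

lemma dual_opt_gap:
  assumes opt: "dual_opt P p x L U eta lam a" and b: "\<forall>q\<in>P. b q \<ge> 0" and "eta > 0" "lam > 0"
  shows "(\<Sum>q\<in>P. (a q - b q)\<^sup>2) / 4 \<le> Dual P p x L U eta lam a - Dual P p x L U eta lam b"
proof (rule le_if_one_minus_mult_le)
  fix t :: real assume t: "0 < t" "t \<le> 1"
  define D where "D = Dual P p x L U eta lam"
  define N where "N = (\<Sum>q\<in>P. (a q - b q)\<^sup>2)"
  have "\<forall>q\<in>P. (1 - t) * a q + t * b q \<ge> 0"
    using dual_opt_nonneg[OF opt] b t by simp
  then have "D (\<lambda>q. (1 - t) * a q + t * b q) \<le> D a"
    unfolding D_def by (rule dual_opt_le[OF opt])
  moreover have "(1 - t) * D a + t * D b + t * (1 - t) / 4 * N \<le> D (\<lambda>q. (1 - t) * a q + t * b q)"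
    unfolding D_def N_def using t assms by (intro Dual_strongly_concave) auto
  moreover have "(1 - t) * D a + t * D b + t * (1 - t) / 4 * N = D a - t * (D a - D b) + t * ((1 - t) * (N / 4))"
    by (simp add: algebra_simps)
  ultimately have "t * ((1 - t) * (N / 4)) \<le> t * (D a - D b)"
    by linarith
  then show "(1 - t) * (N / 4) \<le> D a - D b"
    using t by simp
qed

definition dual_core :: "(nat \<times> nat \<times> bool) set \<Rightarrow> nat \<Rightarrow> (nat \<Rightarrow> nat \<Rightarrow> real) \<Rightarrow> real \<Rightarrow> real
    \<Rightarrow> real \<Rightarrow> (nat \<times> nat \<times> bool \<Rightarrow> real) \<Rightarrow> real" where
  "dual_core P p x L U eta \<theta> =
     (\<Sum>q\<in>P. tvec L U q * \<theta> q) - 1 / (2 * eta) * (\<Sum>k<p. (max (Cmul P x \<theta> k - 1) 0)\<^sup>2)"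

lemma Dual_scale:
  assumes "eta > 0" "lam > 0"
  shows "Dual P p x L U eta lam (\<lambda>q. lam * \<theta> q)
    = lam * dual_core P p x L U eta \<theta> - lam\<^sup>2 / 4 * (\<Sum>q\<in>P. (\<theta> q)\<^sup>2)"
proof -
  have "max (lam * Cmul P x \<theta> k - lam) 0 = lam * max (Cmul P x \<theta> k - 1) 0" for k
    using assms by (simp add: max_def algebra_simps)
  then have "mvec P x eta lam (\<lambda>q. lam * \<theta> q) k = max (Cmul P x \<theta> k - 1) 0 / eta" for k
    unfolding mvec_def Cmul_scale using assms by simp
  then have "(\<Sum>k<p. (mvec P x eta lam (\<lambda>q. lam * \<theta> q) k)\<^sup>2)
      = (\<Sum>k<p. (max (Cmul P x \<theta> k - 1) 0)\<^sup>2) / eta\<^sup>2"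
    by (simp add: power_divide sum_divide_distrib)
  moreover have "(\<Sum>q\<in>P. (lam * \<theta> q)\<^sup>2) = lam\<^sup>2 * (\<Sum>q\<in>P. (\<theta> q)\<^sup>2)"
    by (simp add: power_mult_distrib sum_distrib_left)
  moreover have "(\<Sum>q\<in>P. tvec L U q * (lam * \<theta> q)) = lam * (\<Sum>q\<in>P. tvec L U q * \<theta> q)"
    by (simp add: sum_distrib_left algebra_simps)
  ultimately show ?thesis
    using assms unfolding Dual_def dual_core_def by (simp add: power2_eq_square field_simps)
qed

lemma dual_opt_core_gap:
  assumes opt: "dual_opt P p x L U eta lam (\<lambda>q. lam * \<theta> q)" and \<theta>': "\<forall>q\<in>P. \<theta>' q \<ge> 0"
    and "eta > 0" "lam > 0"
  shows "lam / 2 * (\<Sum>q\<in>P. \<theta> q * (\<theta> q - \<theta>' q))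
    \<le> dual_core P p x L U eta \<theta> - dual_core P p x L U eta \<theta>'"
proof -
  let ?F = "dual_core P p x L U eta" and ?N = "\<lambda>\<theta>. \<Sum>q\<in>P. (\<theta> q)\<^sup>2"
  have "(\<Sum>q\<in>P. (lam * \<theta> q - lam * \<theta>' q)\<^sup>2) / 4
      \<le> lam * ?F \<theta> - lam\<^sup>2 / 4 * ?N \<theta> - (lam * ?F \<theta>' - lam\<^sup>2 / 4 * ?N \<theta>')"
    using dual_opt_gap[OF opt, of "\<lambda>q. lam * \<theta>' q"] \<theta>' assms unfolding Dual_scale[OF assms(3,4)]
    by simp
  moreover have "(\<Sum>q\<in>P. (lam * \<theta> q - lam * \<theta>' q)\<^sup>2) + lam\<^sup>2 * ?N \<theta> - lam\<^sup>2 * ?N \<theta>'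
      = 2 * lam\<^sup>2 * (\<Sum>q\<in>P. \<theta> q * (\<theta> q - \<theta>' q))"
    by (simp add: sum_distrib_left sum_subtractf[symmetric] sum.distrib[symmetric]
        power2_eq_square algebra_simps)
  ultimately have "lam * (lam / 2 * (\<Sum>q\<in>P. \<theta> q * (\<theta> q - \<theta>' q))) \<le> lam * (?F \<theta> - ?F \<theta>')"
    by (simp add: power2_eq_square algebra_simps)
  then show ?thesis
    using assms by simp
qed

lemma dual_opt_monotone:
  assumes opt0: "dual_opt P p x L U eta lam0 a0" and opt1: "dual_opt P p x L U eta lam1 a1"
    and "eta > 0" "lam0 > 0" "lam1 > 0"
  shows "(\<Sum>q\<in>P. (a0 q - a1 q) * (a0 q / lam0 - a1 q / lam1)) \<le> 0"
proof -
  define \<theta>0 \<theta>1 where "\<theta>0 = (\<lambda>q. a0 q / lam0)" and "\<theta>1 = (\<lambda>q. a1 q / lam1)"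
  have a0: "a0 = (\<lambda>q. lam0 * \<theta>0 q)" and a1: "a1 = (\<lambda>q. lam1 * \<theta>1 q)"
    using assms unfolding \<theta>0_def \<theta>1_def by auto
  have "\<forall>q\<in>P. \<theta>0 q \<ge> 0" "\<forall>q\<in>P. \<theta>1 q \<ge> 0"
    using dual_opt_nonneg[OF opt0] dual_opt_nonneg[OF opt1] assms unfolding \<theta>0_def \<theta>1_def by auto
  then have "lam0 / 2 * (\<Sum>q\<in>P. \<theta>0 q * (\<theta>0 q - \<theta>1 q)) + lam1 / 2 * (\<Sum>q\<in>P. \<theta>1 q * (\<theta>1 q - \<theta>0 q)) \<le> 0"
    using dual_opt_core_gap[of P p x L U eta lam0 \<theta>0 \<theta>1] dual_opt_core_gap[of P p x L U eta lam1 \<theta>1 \<theta>0]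
      opt0 opt1 assms unfolding a0 a1 by linarith
  moreover have "(\<Sum>q\<in>P. (a0 q - a1 q) * (a0 q / lam0 - a1 q / lam1))
      = lam0 * (\<Sum>q\<in>P. \<theta>0 q * (\<theta>0 q - \<theta>1 q)) + lam1 * (\<Sum>q\<in>P. \<theta>1 q * (\<theta>1 q - \<theta>0 q))"
    unfolding \<theta>0_def \<theta>1_def using assms
    by (simp add: sum_distrib_left sum.distrib[symmetric] algebra_simps)
  ultimately show ?thesis
    by linarith
qed

lemma dual_opt_ball:
  assumes "dual_opt P p x L U eta lam0 a0" "dual_opt P p x L U eta lam1 a1"
    and "eta > 0" "lam0 > 0" "lam1 > 0"
  shows "L2_set (\<lambda>q. a1 q - (lam0 + lam1) / (2 * lam0) * a0 q) P
    \<le> \<bar>lam0 - lam1\<bar> / (2 * lam0) * L2_set a0 P"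
proof -
  let ?c = "(lam0 + lam1) / (2 * lam0)" and ?d = "(lam0 - lam1) / (2 * lam0)"
  have "(a1 q - ?c * a0 q)\<^sup>2 = ?d\<^sup>2 * (a0 q)\<^sup>2 + lam1 * ((a0 q - a1 q) * (a0 q / lam0 - a1 q / lam1))"
    for q
    using assms by (simp add: power2_eq_square field_simps)
  then have "(\<Sum>q\<in>P. (a1 q - ?c * a0 q)\<^sup>2)
      = ?d\<^sup>2 * (\<Sum>q\<in>P. (a0 q)\<^sup>2) + lam1 * (\<Sum>q\<in>P. (a0 q - a1 q) * (a0 q / lam0 - a1 q / lam1))"
    by (simp add: sum.distrib sum_distrib_left)
  also have "\<dots> \<le> ?d\<^sup>2 * (\<Sum>q\<in>P. (a0 q)\<^sup>2)"
    using dual_opt_monotone[OF assms] assms by (simp add: mult_nonneg_nonpos)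
  finally have "L2_set (\<lambda>q. a1 q - ?c * a0 q) P \<le> sqrt (?d\<^sup>2 * (\<Sum>q\<in>P. (a0 q)\<^sup>2))"
    unfolding L2_set_def by simp
  also have "\<dots> = \<bar>lam0 - lam1\<bar> / (2 * lam0) * L2_set a0 P"
    using assms unfolding L2_set_def by (simp add: real_sqrt_mult)
  finally show ?thesis .
qed

lemma L2_set_ball_perturb:
  assumes ball: "L2_set (\<lambda>q. b q - c * a q) P \<le> \<bar>d\<bar> * L2_set a P"
    and close: "L2_set (\<lambda>q. a' q - a q) P \<le> \<epsilon>" and "c \<ge> 0"
  shows "L2_set (\<lambda>q. b q - c * a' q) P \<le> L2_set (\<lambda>q. d * a' q) P + (c + \<bar>d\<bar>) * \<epsilon>"
proof -
  have close': "L2_set (\<lambda>q. a q - a' q) P \<le> \<epsilon>"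
    using close unfolding L2_set_def by (simp add: power2_commute)
  have "L2_set (\<lambda>q. b q - c * a' q) P = L2_set (\<lambda>q. (b q - c * a q) + c * (a q - a' q)) P"
    by (simp add: algebra_simps)
  also have "\<dots> \<le> L2_set (\<lambda>q. b q - c * a q) P + c * L2_set (\<lambda>q. a q - a' q) P"
    using L2_set_triangle_ineq L2_set_right_distrib[OF \<open>c \<ge> 0\<close>] by metis
  also have "\<dots> \<le> \<bar>d\<bar> * L2_set a P + c * \<epsilon>"
    using ball close' \<open>c \<ge> 0\<close> by (simp add: add_mono mult_left_mono)
  also have "L2_set a P \<le> L2_set a' P + \<epsilon>"
    using L2_set_triangle_ineq[of a' "\<lambda>q. a q - a' q" P] close' by simp
  then have "\<bar>d\<bar> * L2_set a P \<le> \<bar>d\<bar> * (L2_set a' P + \<epsilon>)"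
    by (simp add: mult_left_mono)
  finally have "L2_set (\<lambda>q. b q - c * a' q) P \<le> \<bar>d\<bar> * L2_set a' P + (c + \<bar>d\<bar>) * \<epsilon>"
    by (simp add: algebra_simps)
  moreover have "L2_set (\<lambda>q. d * a' q) P = \<bar>d\<bar> * L2_set a' P"
    unfolding L2_set_def by (simp add: power_mult_distrib sum_distrib_left[symmetric] real_sqrt_mult)
  ultimately show ?thesis
    by simp
qed

theorem theorem3:
  fixes n K p :: nat and x :: "nat \<Rightarrow> nat \<Rightarrow> real" and Ds Ss :: "nat \<Rightarrow> nat set"
    and L U eta lam0 lam1 \<epsilon> :: real and a0s a1s a0 :: "nat \<times> nat \<times> bool \<Rightarrow> real"
  assumes "n \<ge> 1" "K \<ge> 1" "p \<ge> 1"
    and "\<And>i k. i \<in> {1..n} \<Longrightarrow> k < p \<Longrightarrow> x i k \<ge> 0"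
    and "\<And>i. i \<in> {1..n} \<Longrightarrow> Ds i \<subseteq> {1..n} \<and> card (Ds i) = K"
    and "\<And>i. i \<in> {1..n} \<Longrightarrow> Ss i \<subseteq> {1..n} \<and> card (Ss i) = K"
    and "L \<ge> U" "U \<ge> 0" "eta > 0" "lam0 > 0" "lam1 > 0"
    and "dual_opt (pairs n Ds Ss) p x L U eta lam0 a0s"
    and "dual_opt (pairs n Ds Ss) p x L U eta lam1 a1s"
    and "\<epsilon> \<ge> 0"
    and "vnorm (pairs n Ds Ss) (\<lambda>q. a0 q - a0s q) \<le> \<epsilon>"
  shows "vnorm (pairs n Ds Ss) (\<lambda>q. a1s q - (lam0 + lam1) / (2 * lam0) * a0 q)
         \<le> vnorm (pairs n Ds Ss) (\<lambda>q. (lam0 - lam1) / (2 * lam0) * a0 q)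
           + ((lam0 + lam1) / (2 * lam0) + \<bar>lam0 - lam1\<bar> / (2 * lam0)) * \<epsilon>"
proof -
  let ?P = "pairs n Ds Ss" and ?c = "(lam0 + lam1) / (2 * lam0)" and ?d = "(lam0 - lam1) / (2 * lam0)"
  have abs_d: "\<bar>?d\<bar> = \<bar>lam0 - lam1\<bar> / (2 * lam0)"
    using \<open>lam0 > 0\<close> by simp
  have "L2_set (\<lambda>q. a1s q - ?c * a0s q) ?P \<le> \<bar>?d\<bar> * L2_set a0s ?P"
    unfolding abs_d using dual_opt_ball assms(9-13) by blast
  moreover have "L2_set (\<lambda>q. a0 q - a0s q) ?P \<le> \<epsilon>"
    using assms(15) unfolding vnorm_eq_L2_set .
  moreover have "?c \<ge> 0"
    using \<open>lam0 > 0\<close> \<open>lam1 > 0\<close> by simp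
  ultimately show ?thesis
    unfolding vnorm_eq_L2_set abs_d[symmetric] by (rule L2_set_ball_perturb)
qed

end
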